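(* Let $\Omega := \{0,1\}^{\mathbb{Z}}$, let $\tau:\Omega\to\Omega$ be the shift $(\tau\omega)(x) := \omega(x-1)$, and let $T:\mathbb{Z}\to\mathbb{Z}$ be $Tx := x+1$. Let $\Delta\notin\mathbb{Z}$ be an extra symbol and set $T(\Delta):=\Delta$. Let $X:\Omega\to\mathbb{Z}\cup\{\Delta\}$ be a function such that $X^{-1}\{\Delta\}$ is countable and $X(\tau\omega)=T(X(\omega))$ for all $\omega\in\Omega$. Let $\mathcal{F}$ be any $\sigma$-algebra on $\Omega$ that contains all singletons and satisfies $\tau A\in\mathcal{F}$ whenever $A\in\mathcal{F}$ (where $\tau A:=\{\tau\omega:\omega\in A\}$), and suppose there is a measure $\mu$ on $\mathcal{F}$ with $\mu=\mu\circ\tau$, $\mu(\Omega)\in(0,\infty)$, and $\mu(\{\omega\})=0$ for all $\omega\in\Omega$. Then $X$ is not measurable with respect to $\mathcal{F}$, i.e., there exists $x\in\mathbb{Z}$ with $X^{-1}\{x\}\notin\mathcal{F}$.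
   Context: A function $X:\Omega\to\mathbb{Z}\cup\{\Delta\}$ is called measurable with respect to $\mathcal{F}$ if $X^{-1}\{x\}\in\mathcal{F}$ for all $x\in\mathbb{Z}$. *)

theory Defs
  imports "HOL-Analysis.Analysis"
begin

text \<open>Omega = {0,1}^Z is modelled as the type int => bool (False = 0, True = 1).
  The extra symbol Delta is modelled by None in int option.\<close>

definition shift :: "(int \<Rightarrow> bool) \<Rightarrow> (int \<Rightarrow> bool)" where
  "shift \<omega> = (\<lambda>x. \<omega> (x - 1))"

definition Tmap :: "int option \<Rightarrow> int option" where
  "Tmap = map_option (\<lambda>x. x + 1)"

end

theory Submission
  imports Defs
begin

text \<open>If every level set \<open>X -` {Some x}\<close> were measurable, the shift would carry it onto
  \<open>X -` {Some (x + 1)}\<close> (\<open>\<tau>\<close> is onto and \<open>T\<close> is injective), so the disjoint level sets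
  \<open>X -` {Some (x + n)}\<close>, \<open>n \<in> \<nat>\<close>, would all have the same measure; as these measures sum to
  at most \<open>\<mu>(\<Omega>) < \<infinity>\<close>, it is \<open>0\<close>. The remaining set \<open>X -` {None}\<close> is a countable union of
  null singletons, so \<open>\<Omega>\<close> itself would be null.\<close>

lemma suminf_const_ennreal_eq_top:
  assumes "(0::ennreal) < c"
  shows "(\<Sum>n. c) = top"
proof (cases c)
  case (real r)
  with assms have "r > 0"
    by (metis ennreal_0 less_irrefl order_le_less)
  then have "\<not> summable (\<lambda>_::nat. r)"
    by (simp add: summable_const_iff)
  with \<open>r > 0\<close> have "(\<Sum>n. ennreal r) = top"
    by (intro summable_iff_suminf_neq_top) auto
  with real show ?thesis
    by simp
next
  case top
  have "(\<Sum>n::nat. top::ennreal) = top"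
    by (meson ennreal_suminf_lessD top.not_eq_extremum)
  with top show ?thesis
    by simp
qed

lemma emeasure_disjoint_family_const_eq_0:
  fixes A :: "nat \<Rightarrow> 'a set"
  assumes "emeasure M (space M) < \<infinity>"
    and "disjoint_family A" and "range A \<subseteq> sets M"
    and "\<And>n. emeasure M (A n) = c"
  shows "c = 0"
proof (rule ccontr)
  assume "c \<noteq> 0"
  then have "top = (\<Sum>n::nat. c)"
    by (simp add: suminf_const_ennreal_eq_top zero_less_iff_neq_zero)
  also have "\<dots> = emeasure M (\<Union>n. A n)"
    using suminf_emeasure[OF assms(3,2)] assms(4) by simp
  also have "\<dots> \<le> emeasure M (space M)"
    using assms(3) by (intro emeasure_space)
  finally show False
    using assms(1) by (simp add: top_unique)
qed

lemma image_vimage_singleton_equivariant: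
  assumes "surj f" and "inj g" and "\<And>\<omega>. X (f \<omega>) = g (X \<omega>)"
  shows "f ` (X -` {y}) = X -` {g y}"
proof
  show "f ` (X -` {y}) \<subseteq> X -` {g y}"
    using assms(3) by auto
  show "X -` {g y} \<subseteq> f ` (X -` {y})"
  proof
    fix w assume "w \<in> X -` {g y}"
    moreover obtain v where "w = f v"
      using assms(1) by (metis surjD)
    ultimately have "X v = y"
      using assms(2,3) by (simp add: inj_eq)
    with \<open>w = f v\<close> show "w \<in> f ` (X -` {y})"
      by blast
  qed
qed

lemma surj_shift: "surj shift"
proof (rule surjI)
  show "shift (\<lambda>y. w (y + 1)) = w" for w
    by (simp add: shift_def)
qed

lemma inj_Tmap: "inj Tmap"
  unfolding Tmap_def by (rule option.inj_map) (simp add: inj_def)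

theorem lemma2:
  fixes X :: "(int \<Rightarrow> bool) \<Rightarrow> int option"
    and M :: "(int \<Rightarrow> bool) measure"
  assumes "countable (X -` {None})"
    and "\<forall>\<omega>. X (shift \<omega>) = Tmap (X \<omega>)"
    and "space M = UNIV"
    and "\<forall>\<omega>. {\<omega>} \<in> sets M"
    and "\<forall>A \<in> sets M. shift ` A \<in> sets M"
    and "\<forall>A \<in> sets M. emeasure M (shift ` A) = emeasure M A"
    and "0 < emeasure M (space M)" and "emeasure M (space M) < \<infinity>"
    and "\<forall>\<omega>. emeasure M {\<omega>} = 0"
  shows "\<exists>x::int. X -` {Some x} \<notin> sets M"
proof (rule ccontr)
  assume "\<not> ?thesis"
  then have level_sets: "X -` {Some x} \<in> sets M" for x
    by auto
  have "shift ` (X -` {Some x}) = X -` {Some (x + 1)}" for x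
    using image_vimage_singleton_equivariant[OF surj_shift inj_Tmap] assms(2)
    by (simp add: Tmap_def)
  then have shift_step: "emeasure M (X -` {Some (x + 1)}) = emeasure M (X -` {Some x})" for x
    using assms(6) level_sets by metis
  have "emeasure M (X -` {Some (x + int n)}) = emeasure M (X -` {Some x})" for x n
  proof (induction n)
    case (Suc n)
    then show ?case
      using shift_step[of "x + int n"] by (simp add: ac_simps)
  qed simp
  then have "emeasure M (X -` {Some x}) = 0" for x
    using assms(8) level_sets
    by (intro emeasure_disjoint_family_const_eq_0[of M "\<lambda>n. X -` {Some (x + int n)}"])
      (auto simp: disjoint_family_on_def)
  then have "(\<Union>x. X -` {Some x}) \<in> null_sets M"
    using level_sets by (intro null_sets_UN) auto
  moreover have "(\<Union>\<omega>\<in>X -` {None}. {\<omega>}) \<in> null_sets M"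
    using assms(1,4,9) by (intro null_sets_UN') auto
  moreover have "space M = (\<Union>x. X -` {Some x}) \<union> (\<Union>\<omega>\<in>X -` {None}. {\<omega>})"
    using assms(3) by auto
  ultimately have "emeasure M (space M) = 0"
    by (metis null_sets.Un null_setsD1)
  with assms(7) show False
    by simp
qed

end
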